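(* Let $\sigma$ be an optimal solution of a Bin Packing instance, let $b_1,\dots,b_r$ be the bins of $\sigma$ that contain small items and exactly one large item, in an arbitrary order, and let $L$ be the collection of the large items in these bins. Process $j=1,\dots,r$ and place into $b_j$ (which keeps its small items) the largest item of $L$ not yet placed into $b_1,\dots,b_{j-1}$ whose size plus the total size of the small items of $b_j$ is at most $T$. Then in each step such an item exists, and the resulting packing (all other bins unchanged) is a feasible, and hence optimal, solution.
   Context: Bin Packing: given a sequence of items with sizes in $\mathbb{Q}_{\ge 0}$ and a capacity $T$, a solution assigns the items to bins so that the total size in each bin is at most $T$; an optimal solution uses the minimum number of bins. A subsequence of items is 3-incompatible if no three distinct items of it have total size at most $T$; the large items form a largest 3-incompatible subsequence and the remaining items are small. *)

theory Defs
  imports Complex_Main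
begin

text \<open>Items are the indices 0..<length s of the size list s; a solution is an
assignment f of items to bin labels; its bins are the labels actually used.\<close>

definition items :: "rat list \<Rightarrow> nat set" where
  "items s = {..<length s}"

definition bin_items :: "rat list \<Rightarrow> (nat \<Rightarrow> nat) \<Rightarrow> nat \<Rightarrow> nat set" where
  "bin_items s f b = {i \<in> items s. f i = b}"

definition feasible :: "rat list \<Rightarrow> rat \<Rightarrow> (nat \<Rightarrow> nat) \<Rightarrow> bool" where
  "feasible s T f \<longleftrightarrow> (\<forall>b. (\<Sum>i\<in>bin_items s f b. s ! i) \<le> T)"

definition num_bins :: "rat list \<Rightarrow> (nat \<Rightarrow> nat) \<Rightarrow> nat" where
  "num_bins s f = card (f ` items s)"

definition optimal :: "rat list \<Rightarrow> rat \<Rightarrow> (nat \<Rightarrow> nat) \<Rightarrow> bool" where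
  "optimal s T f \<longleftrightarrow> feasible s T f \<and> (\<forall>g. feasible s T g \<longrightarrow> num_bins s f \<le> num_bins s g)"

definition incompatible3 :: "rat list \<Rightarrow> rat \<Rightarrow> nat set \<Rightarrow> bool" where
  "incompatible3 s T A \<longleftrightarrow> A \<subseteq> items s \<and>
     (\<forall>i\<in>A. \<forall>j\<in>A. \<forall>k\<in>A. i \<noteq> j \<and> i \<noteq> k \<and> j \<noteq> k \<longrightarrow> s ! i + s ! j + s ! k > T)"

definition large_items :: "rat list \<Rightarrow> rat \<Rightarrow> nat set \<Rightarrow> bool" where
  "large_items s T A \<longleftrightarrow> incompatible3 s T A \<and> (\<forall>B. incompatible3 s T B \<longrightarrow> card B \<le> card A)"

definition small_load :: "rat list \<Rightarrow> nat set \<Rightarrow> (nat \<Rightarrow> nat) \<Rightarrow> nat \<Rightarrow> rat" where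
  "small_load s A f b = (\<Sum>i\<in>bin_items s f b - A. s ! i)"

definition mixed_bins :: "rat list \<Rightarrow> nat set \<Rightarrow> (nat \<Rightarrow> nat) \<Rightarrow> nat set" where
  "mixed_bins s A f = {b. bin_items s f b - A \<noteq> {} \<and> card (bin_items s f b \<inter> A) = 1}"

text \<open>Step j of the greedy process (bins in order bs, large items Lg, choices p):
  p j is a largest not-yet-placed item of Lg that fits with the small items of bs!j.\<close>
definition greedy_step ::
  "rat list \<Rightarrow> rat \<Rightarrow> nat set \<Rightarrow> (nat \<Rightarrow> nat) \<Rightarrow> nat list \<Rightarrow> nat set \<Rightarrow> (nat \<Rightarrow> nat) \<Rightarrow> nat \<Rightarrow> bool" where
  "greedy_step s T A f bs Lg p j \<longleftrightarrow>
     p j \<in> Lg - p ` {..<j} \<and> s ! (p j) + small_load s A f (bs ! j) \<le> T \<and>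
     (\<forall>i\<in>Lg - p ` {..<j}. s ! i + small_load s A f (bs ! j) \<le> T \<longrightarrow> s ! i \<le> s ! (p j))"

definition repack :: "nat list \<Rightarrow> (nat \<Rightarrow> nat) \<Rightarrow> (nat \<Rightarrow> nat) \<Rightarrow> nat \<Rightarrow> nat" where
  "repack bs f p i = (if i \<in> p ` {..<length bs} then bs ! (THE k. k < length bs \<and> p k = i) else f i)"

end

theory Submission
  imports Defs "HOL-Combinatorics.Transposition"
begin

text \<open>The bins \<open>b\<^sub>1, \<dots>, b\<^sub>r\<close> of \<open>\<sigma>\<close> and their large items form a perfect matching in which
  every item fits its bin. The greedy process keeps the invariant that the items not yet
  placed can be matched perfectly to the bins not yet processed, each item fitting its bin:
  if the matching gives bin \<open>b\<^sub>j\<close> the item \<open>x\<close>, then the greedy choice \<open>y\<close> is at least as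
  large as \<open>x\<close>, so swapping the partners of \<open>b\<^sub>j\<close> and of the bin matched with \<open>y\<close> keeps every
  item fitting. Hence a fitting item always exists, all large items get placed, and the new
  packing is feasible and uses no bin that \<open>\<sigma>\<close> does not use.\<close>

definition greedy_choice ::
  "('a \<Rightarrow> 'b::ordered_ab_semigroup_add) \<Rightarrow> (nat \<Rightarrow> 'b) \<Rightarrow> 'b \<Rightarrow> 'a set \<Rightarrow> (nat \<Rightarrow> 'a) \<Rightarrow> nat \<Rightarrow> bool"
where
  "greedy_choice sz load T L p j \<longleftrightarrow>
     p j \<in> L - p ` {..<j} \<and> sz (p j) + load j \<le> T \<and>
     (\<forall>i\<in>L - p ` {..<j}. sz i + load j \<le> T \<longrightarrow> sz i \<le> sz (p j))"

lemma greedy_exchange_step: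
  assumes m: "bij_betw m {j..<n} (L - p ` {..<j})"
    and fit: "\<forall>k\<in>{j..<n}. sz (m k) + load k \<le> T"
    and greedy: "greedy_choice sz load T L p j"
    and "j < n"
  shows "\<exists>m'. bij_betw m' {Suc j..<n} (L - p ` {..<Suc j}) \<and>
           (\<forall>k\<in>{Suc j..<n}. sz (m' k) + load k \<le> T)"
proof -
  have pj: "p j \<in> L - p ` {..<j}" using greedy by (simp add: greedy_choice_def)
  define k where "k = inv_into {j..<n} m (p j)"
  have "p j \<in> m ` {j..<n}" using pj m by (simp add: bij_betw_imp_surj_on)
  then have k: "k \<in> {j..<n}" "m k = p j"
    unfolding k_def by (fact inv_into_into, fact f_inv_into_f)
  define m' where "m' = m \<circ> Transposition.transpose j k"
  have "bij_betw m' {j..<n} (L - p ` {..<j})"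
    unfolding m'_def using k \<open>j < n\<close> by (intro bij_betw_trans[OF _ m]) simp
  then have "bij_betw m' ({j..<n} - {j}) (L - p ` {..<j} - {p j})"
    using \<open>j < n\<close> k pj by (intro bij_betw_DiffI) (auto simp: m'_def)
  moreover have "{j..<n} - {j} = {Suc j..<n}" by auto
  moreover have "L - p ` {..<j} - {p j} = L - p ` {..<Suc j}" by (auto simp: lessThan_Suc)
  moreover have "sz (m' i) + load i \<le> T" if i: "i \<in> {Suc j..<n}" for i
  proof (cases "i = k")
    case True
    have "sz (m j) \<le> sz (p j)"
      using greedy fit \<open>j < n\<close> bij_betw_apply[OF m] by (simp add: greedy_choice_def)
    then have "sz (m j) + load k \<le> sz (m k) + load k" using k by (simp add: add_right_mono)
    also have "\<dots> \<le> T" using fit k by blast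
    finally show ?thesis using True by (simp add: m'_def)
  next
    case False
    then show ?thesis using i fit by (simp add: m'_def)
  qed
  ultimately show ?thesis by auto
qed

lemma greedy_matching_invariant:
  assumes m0: "bij_betw m0 {..<n} L" "\<forall>k<n. sz (m0 k) + load k \<le> T"
    and greedy: "\<forall>k<j. greedy_choice sz load T L p k"
    and "j \<le> n"
  shows "\<exists>m. bij_betw m {j..<n} (L - p ` {..<j}) \<and> (\<forall>k\<in>{j..<n}. sz (m k) + load k \<le> T)"
  using greedy \<open>j \<le> n\<close>
proof (induction j)
  case 0
  then show ?case using m0 by (auto simp: atLeast0LessThan)
next
  case (Suc j)
  then show ?case by (auto intro: greedy_exchange_step)
qed

lemma greedy_choice_exists:
  assumes "bij_betw m0 {..<n} L" "\<forall>k<n. sz (m0 k) + load k \<le> T"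
    and "\<forall>k<j. greedy_choice sz load T L p k" "j < n"
  shows "\<exists>i\<in>L - p ` {..<j}. sz i + load j \<le> T"
proof -
  obtain m where "bij_betw m {j..<n} (L - p ` {..<j})" "\<forall>k\<in>{j..<n}. sz (m k) + load k \<le> T"
    using greedy_matching_invariant[OF assms(1-3)] \<open>j < n\<close> by auto
  then show ?thesis using \<open>j < n\<close> by (intro bexI[of _ "m j"]) (auto dest: bij_betw_apply)
qed

lemma greedy_choices_bij:
  assumes "bij_betw m0 {..<n} L" "\<forall>k<n. sz (m0 k) + load k \<le> T"
    and greedy: "\<forall>k<n. greedy_choice sz load T L p k"
  shows "bij_betw p {..<n} L"
proof -
  have fresh: "p k \<in> L - p ` {..<k}" if "k < n" for k
    using greedy that by (simp add: greedy_choice_def)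
  obtain m where "bij_betw m {n..<n} (L - p ` {..<n})"
    using greedy_matching_invariant[OF assms] by auto
  then have "L \<subseteq> p ` {..<n}" by (auto dest: bij_betw_imp_surj_on)
  moreover have "p ` {..<n} \<subseteq> L" using fresh by auto
  moreover have "p a \<noteq> p b" if "b < a" "a < n" for a b
    using fresh[OF \<open>a < n\<close>] \<open>b < a\<close> by auto
  then have "inj_on p {..<n}"
    by (intro inj_onI) (metis lessThan_iff linorder_neqE_nat)
  ultimately show ?thesis by (auto simp: bij_betw_def)
qed

lemma finite_bin_items [simp]: "finite (bin_items s f b)"
  by (simp add: bin_items_def items_def)

lemma bin_load_split:
  "(\<Sum>i\<in>bin_items s f b. s ! i) = (\<Sum>i\<in>bin_items s f b \<inter> A. s ! i) + small_load s A f b"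
  unfolding small_load_def by (rule sum.Int_Diff) simp

lemma single_large_item_fits:
  assumes "feasible s T f" "bin_items s f b \<inter> A = {x}"
  shows "s ! x + small_load s A f b \<le> T"
proof -
  have "s ! x + small_load s A f b = (\<Sum>i\<in>bin_items s f b. s ! i)"
    using assms(2) bin_load_split[of s f b A] by simp
  also have "\<dots> \<le> T" using assms(1) by (simp add: feasible_def)
  finally show ?thesis .
qed

lemma mixed_bins_used: "mixed_bins s A f \<subseteq> f ` items s"
  by (auto simp: mixed_bins_def bin_items_def)

lemma large_items_of_mixed_bins:
  assumes "distinct bs" "set bs \<subseteq> mixed_bins s A f"
  obtains l where "bij_betw l {..<length bs} (\<Union>b\<in>set bs. bin_items s f b \<inter> A)"
    and "\<forall>k<length bs. bin_items s f (bs ! k) \<inter> A = {l k}"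
proof -
  have "\<exists>x. bin_items s f (bs ! k) \<inter> A = {x}" if "k < length bs" for k
    using assms(2) nth_mem[OF that] by (auto simp: mixed_bins_def card_1_singleton_iff)
  then obtain l where l: "\<forall>k<length bs. bin_items s f (bs ! k) \<inter> A = {l k}" by metis
  then have f_l: "f (l k) = bs ! k" if "k < length bs" for k
    using that by (auto simp: bin_items_def)
  have "inj_on l {..<length bs}"
    by (rule inj_onI) (metis f_l lessThan_iff assms(1) nth_eq_iff_index_eq)
  moreover have "(\<Union>b\<in>set bs. bin_items s f b \<inter> A) = l ` {..<length bs}"
    using l by (auto simp: set_conv_nth)
  ultimately show ?thesis using l that by (auto simp: bij_betw_def)
qed

lemma repack_chosen:
  assumes "inj_on p {..<length bs}" "k < length bs"
  shows "repack bs f p (p k) = bs ! k"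
proof -
  have "(THE k'. k' < length bs \<and> p k' = p k) = k"
    using assms by (intro the_equality) (auto dest: inj_onD)
  then show ?thesis using assms(2) by (simp add: repack_def)
qed

lemma repack_unchosen: "i \<notin> p ` {..<length bs} \<Longrightarrow> repack bs f p i = f i"
  by (simp add: repack_def)

lemma bin_items_repack:
  assumes "inj_on p {..<length bs}" "p ` {..<length bs} \<subseteq> items s"
  shows "bin_items s (repack bs f p) b =
    (bin_items s f b - p ` {..<length bs}) \<union> p ` {k. k < length bs \<and> bs ! k = b}"
proof (rule set_eqI)
  fix i
  show "i \<in> bin_items s (repack bs f p) b \<longleftrightarrow>
    i \<in> (bin_items s f b - p ` {..<length bs}) \<union> p ` {k. k < length bs \<and> bs ! k = b}"
  proof (cases "i \<in> p ` {..<length bs}")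
    case True
    then obtain k where k: "k < length bs" "i = p k" by auto
    then have "i \<in> p ` {k. k < length bs \<and> bs ! k = b} \<longleftrightarrow> bs ! k = b"
      using assms(1) by (auto dest: inj_onD)
    then show ?thesis using k assms by (auto simp: bin_items_def repack_chosen)
  next
    case False
    then show ?thesis by (auto simp: bin_items_def repack_unchosen)
  qed
qed

lemma feasible_repack:
  assumes feasible: "feasible s T f" and "distinct bs"
    and p: "bij_betw p {..<length bs} (\<Union>b\<in>set bs. bin_items s f b \<inter> A)"
    and fits: "\<forall>k<length bs. s ! p k + small_load s A f (bs ! k) \<le> T"
  shows "feasible s T (repack bs f p)"
  unfolding feasible_def
proof
  fix b
  let ?L = "\<Union>b\<in>set bs. bin_items s f b \<inter> A"
  have L: "p ` {..<length bs} = ?L" using p by (rule bij_betw_imp_surj_on)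
  have "p ` {..<length bs} \<subseteq> items s" using L by (auto simp: bin_items_def)
  then have bins: "bin_items s (repack bs f p) b =
      (bin_items s f b - ?L) \<union> p ` {k. k < length bs \<and> bs ! k = b}"
    unfolding L[symmetric] by (rule bin_items_repack[OF bij_betw_imp_inj_on[OF p]])
  show "(\<Sum>i\<in>bin_items s (repack bs f p) b. s ! i) \<le> T"
  proof (cases "b \<in> set bs")
    case True
    then obtain k where k: "k < length bs" "b = bs ! k" by (auto simp: in_set_conv_nth)
    then have "{k'. k' < length bs \<and> bs ! k' = b} = {k}"
      using \<open>distinct bs\<close> by (auto simp: nth_eq_iff_index_eq)
    moreover have "bin_items s f b - ?L = bin_items s f b - A" using True by auto
    moreover have "p k \<in> A" using k L by blast
    ultimately have "(\<Sum>i\<in>bin_items s (repack bs f p) b. s ! i) = s ! p k + small_load s A f b"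
      by (simp add: bins small_load_def)
    then show ?thesis using fits k by simp
  next
    case False
    then have "p ` {k. k < length bs \<and> bs ! k = b} = {}" by auto
    moreover have "bin_items s f b \<inter> ?L = {}" using False by (auto simp: bin_items_def)
    ultimately have "bin_items s (repack bs f p) b = bin_items s f b"
      unfolding bins by (simp only: Diff_triv sup_bot.right_neutral)
    then show ?thesis using feasible by (simp add: feasible_def)
  qed
qed

lemma repack_bins_subset:
  assumes "inj_on p {..<length bs}" "set bs \<subseteq> f ` items s"
  shows "repack bs f p ` items s \<subseteq> f ` items s"
proof
  fix b assume "b \<in> repack bs f p ` items s"
  then obtain i where i: "i \<in> items s" "b = repack bs f p i" by auto
  show "b \<in> f ` items s"
  proof (cases "i \<in> p ` {..<length bs}")
    case True
    then show ?thesis using i assms by (auto simp: repack_chosen)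
  next
    case False
    then show ?thesis using i by (simp add: repack_unchosen)
  qed
qed

lemma optimal_if_bins_subset:
  assumes "optimal s T f" "feasible s T g" "g ` items s \<subseteq> f ` items s"
  shows "optimal s T g"
proof -
  have "num_bins s g \<le> num_bins s f"
    unfolding num_bins_def using assms(3) by (intro card_mono) (auto simp: items_def)
  then show ?thesis using assms(1,2) by (auto simp: optimal_def)
qed

theorem claim11:
  fixes s :: "rat list" and T :: rat and \<sigma> :: "nat \<Rightarrow> nat" and A :: "nat set"
    and bs :: "nat list" and Lg :: "nat set"
  assumes nonneg: "\<forall>x\<in>set s. 0 \<le> x"
    and opt: "optimal s T \<sigma>"
    and large: "large_items s T A"
    and bs_dist: "distinct bs"
    and bs_set: "set bs = mixed_bins s A \<sigma>"
    and Lg_def: "Lg = (\<Union>b\<in>set bs. bin_items s \<sigma> b \<inter> A)"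
  shows "(\<forall>j<length bs. \<forall>p. (\<forall>k<j. greedy_step s T A \<sigma> bs Lg p k) \<longrightarrow>
            (\<exists>i\<in>Lg - p ` {..<j}. s ! i + small_load s A \<sigma> (bs ! j) \<le> T))
       \<and> (\<forall>p. (\<forall>k<length bs. greedy_step s T A \<sigma> bs Lg p k) \<longrightarrow>
            feasible s T (repack bs \<sigma> p) \<and> optimal s T (repack bs \<sigma> p))"
proof -
  let ?load = "\<lambda>k. small_load s A \<sigma> (bs ! k)"
  have feasible: "feasible s T \<sigma>" using opt by (simp add: optimal_def)
  obtain l where l_bij: "bij_betw l {..<length bs} Lg"
    and l_bins: "\<forall>k<length bs. bin_items s \<sigma> (bs ! k) \<inter> A = {l k}"
    using large_items_of_mixed_bins[OF bs_dist] bs_set Lg_def by blast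
  have l_fits: "\<forall>k<length bs. s ! l k + ?load k \<le> T"
    using single_large_item_fits[OF feasible] l_bins by blast
  have greedy: "greedy_step s T A \<sigma> bs Lg p k \<longleftrightarrow> greedy_choice ((!) s) ?load T Lg p k" for p k
    by (simp add: greedy_step_def greedy_choice_def)
  show ?thesis
  proof (intro conjI allI impI)
    fix j p assume "j < length bs" "\<forall>k<j. greedy_step s T A \<sigma> bs Lg p k"
    then show "\<exists>i\<in>Lg - p ` {..<j}. s ! i + ?load j \<le> T"
      using greedy_choice_exists[OF l_bij l_fits] greedy by blast
  next
    fix p assume "\<forall>k<length bs. greedy_step s T A \<sigma> bs Lg p k"
    then have p_greedy: "\<forall>k<length bs. greedy_choice ((!) s) ?load T Lg p k"
      using greedy by blast
    then have p_bij: "bij_betw p {..<length bs} Lg"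
      by (rule greedy_choices_bij[OF l_bij l_fits])
    show repack_feasible: "feasible s T (repack bs \<sigma> p)"
      using feasible_repack[OF feasible bs_dist] p_bij p_greedy Lg_def
      by (simp add: greedy_choice_def)
    show "optimal s T (repack bs \<sigma> p)"
      using optimal_if_bins_subset[OF opt repack_feasible] repack_bins_subset
        bij_betw_imp_inj_on[OF p_bij] mixed_bins_used bs_set by blast
  qed
qed

end
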